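(* Let $F\in(k[\bar v,\bar w])^e$ satisfy $F(\bar v,\bar 0)=\bar v$ and $F(\bar 0,\bar w)=\bar w$, and let $\mathbb D=(D_{\mathbf i})$ and $\mathbb D'=(D'_{\mathbf i})$ be two $F$-derivations on the same $k$-algebra $R$. If for every $l\in\{1,\dots,e\}$ and every integer $0\le i<m$ we have $D_{p^i\varepsilon_l}=D'_{p^i\varepsilon_l}$, where $\varepsilon_l$ is the $l$-th unit vector of $\mathbb N^e$, then $\mathbb D=\mathbb D'$.
   Context: $k$ is a field of characteristic $p>0$; rings are commutative with $1$; $e\in\mathbb N_{>0}$, $m\in\mathbb N_{>0}\cup\{\infty\}$. For a $k$-algebra $R$, $R[\bar v]:=R[X_1,\dots,X_e]/(X_1^{p^m},\dots,X_e^{p^m})$ ($R[[\bar X]]$ if $m=\infty$), $v_i$ the image of $X_i$; similarly $R[\bar v,\bar w]$ with a second $e$-tuple $\bar w$ of $m$-truncated variables. $[p^m]=\{0,\dots,p^m-1\}$ ($\mathbb N$ if $m=\infty$), $\bar v^{\mathbf i}=v_1^{i_1}\cdots v_e^{i_e}$. An $m$-truncated $e$-dimensional HS-derivation on $R$ over $k$ is a family $(D_{\mathbf i}:R\to R)_{\mathbf i\in[p^m]^e}$ such that $r\mapsto\sum D_{\mathbf i}(r)\bar v^{\mathbf i}$ is a $k$-algebra homomorphism $R\to R[\bar v]$ with $D_{\mathbf 0}=\mathrm{id}$. For $F=(F_1,\dots,F_e)\in(k[\bar v,\bar w])^e$, it is an $F$-derivation if for all $r\in R$: $\sum_{\mathbf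 i,\mathbf j}D_{\mathbf j}(D_{\mathbf i}(r))\bar v^{\mathbf i}\bar w^{\mathbf j}=\sum_{\mathbf i}D_{\mathbf i}(r)F(\bar v,\bar w)^{\mathbf i}$, where $F^{\mathbf i}=F_1^{i_1}\cdots F_e^{i_e}$. *)

theory Defs
  imports Main "HOL-Library.Extended_Nat" "HOL-Library.Groups_Big_Fun"
begin

(* A (truncated) power series over 'a in variables indexed by 'i is
   represented by its coefficient function ('i => nat) => 'a.
   For the ring R[v] we use 'i = 'e; for k[v,w] and R[v,w] we use
   'i = 'e + 'e, the Inl-variables being v_1..v_e and the Inr-variables
   being w_1..w_e. *)

definition idx :: "nat \<Rightarrow> enat \<Rightarrow> ('i \<Rightarrow> nat) set" where
  "idx p m = {a. \<forall>j. m = \<infinity> \<or> a j < p ^ the_enat m}"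

definition trunc :: "nat \<Rightarrow> enat \<Rightarrow> (('i \<Rightarrow> nat) \<Rightarrow> 'a::zero) \<Rightarrow> ('i \<Rightarrow> nat) \<Rightarrow> 'a" where
  "trunc p m f = (\<lambda>c. if c \<in> idx p m then f c else 0)"

(* product in the truncated ring (I finite, so the convolution sum is finite) *)
definition tmul :: "nat \<Rightarrow> enat \<Rightarrow> (('i::finite \<Rightarrow> nat) \<Rightarrow> 'a::comm_ring_1)
    \<Rightarrow> (('i \<Rightarrow> nat) \<Rightarrow> 'a) \<Rightarrow> ('i \<Rightarrow> nat) \<Rightarrow> 'a" where
  "tmul p m f g = trunc p m (\<lambda>c. \<Sum>a\<in>{a. a \<le> c}. f a * g (c - a))"

definition tone :: "('i \<Rightarrow> nat) \<Rightarrow> 'a::comm_ring_1" where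
  "tone = (\<lambda>c. if c = (\<lambda>_. 0) then 1 else 0)"

definition tconst :: "'a \<Rightarrow> ('i \<Rightarrow> nat) \<Rightarrow> 'a::comm_ring_1" where
  "tconst x = (\<lambda>c. if c = (\<lambda>_. 0) then x else 0)"

definition tpow :: "nat \<Rightarrow> enat \<Rightarrow> (('i::finite \<Rightarrow> nat) \<Rightarrow> 'a::comm_ring_1) \<Rightarrow> nat
    \<Rightarrow> ('i \<Rightarrow> nat) \<Rightarrow> 'a" where
  "tpow p m f n = (tmul p m f ^^ n) tone"

definition Fpow :: "nat \<Rightarrow> enat \<Rightarrow> ('e::finite \<Rightarrow> (('e + 'e) \<Rightarrow> nat) \<Rightarrow> 'k::comm_ring_1)
    \<Rightarrow> ('e \<Rightarrow> nat) \<Rightarrow> (('e + 'e) \<Rightarrow> nat) \<Rightarrow> 'k" where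
  "Fpow p m F i = Finite_Set.fold (\<lambda>l acc. tmul p m (tpow p m (F l) (i l)) acc) tone UNIV"

definition in_trunc :: "nat \<Rightarrow> enat \<Rightarrow> (('i \<Rightarrow> nat) \<Rightarrow> 'a::zero) \<Rightarrow> bool" where
  "in_trunc p m f \<longleftrightarrow> (\<forall>c. c \<notin> idx p m \<longrightarrow> f c = 0)"

definition unitv :: "'e \<Rightarrow> 'e \<Rightarrow> nat" where
  "unitv l = (\<lambda>j. if j = l then 1 else 0)"

(* m-truncated e-dimensional HS-derivation on R over k, where the k-algebra
   structure of R is given by the ring homomorphism phi : k \<rightarrow> R:
   r \<mapsto> \<Sum> D_i(r) v^i is a k-algebra homomorphism R \<rightarrow> R[v] and D_0 = id *)
definition HS_deriv :: "nat \<Rightarrow> enat \<Rightarrow> ('k \<Rightarrow> 'r) \<Rightarrow> (('e::finite \<Rightarrow> nat) \<Rightarrow> 'r \<Rightarrow> 'r::comm_ring_1) \<Rightarrow> bool" where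
  "HS_deriv p m phi D \<longleftrightarrow>
     (let Phi = (\<lambda>r. trunc p m (\<lambda>i. D i r)) in
       (\<forall>r s. Phi (r + s) = (\<lambda>i. Phi r i + Phi s i)) \<and>
       (\<forall>r s. Phi (r * s) = tmul p m (Phi r) (Phi s)) \<and>
       (\<forall>c. Phi (phi c) = tconst (phi c))) \<and>
     D (\<lambda>_. 0) = id"

(* D is an F-derivation:  \<Sum>_{i,j} D_j(D_i r) v^i w^j = \<Sum>_i D_i(r) F(v,w)^i,
   compared coefficientwise at every monomial v^a w^b of R[v,w];
   the right-hand coefficient is the sum over i \<in> [p^m]^e of D_i(r) times the
   (v^a w^b)-coefficient of F^i (mapped into R); this has finitely many nonzero
   terms (Sum_any = sum over the finite support). *)
definition F_deriv :: "nat \<Rightarrow> enat \<Rightarrow> ('k::comm_ring_1 \<Rightarrow> 'r)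
    \<Rightarrow> ('e::finite \<Rightarrow> (('e + 'e) \<Rightarrow> nat) \<Rightarrow> 'k)
    \<Rightarrow> (('e \<Rightarrow> nat) \<Rightarrow> 'r \<Rightarrow> 'r::comm_ring_1) \<Rightarrow> bool" where
  "F_deriv p m phi F D \<longleftrightarrow> HS_deriv p m phi D \<and>
     (\<forall>r. \<forall>c \<in> idx p m.
        D (c \<circ> Inr) (D (c \<circ> Inl) r) =
        Sum_any (\<lambda>i. if i \<in> idx p m then D i r * phi (Fpow p m F i c) else 0))"

end

theory Submission
  imports Defs "HOL-Library.FuncSet" "HOL-Library.Function_Algebras"
    "HOL-Computational_Algebra.Polynomial"
begin

text \<open>Induction on the total degree \<open>|n|\<close> of the multi-index \<open>n\<close>. Comparing coefficients of
  \<open>v\<^sup>a w\<^sup>b\<close>, \<open>a + b = n\<close>, in the \<open>F\<close>-derivation identity gives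
  \<open>D\<^sub>b (D\<^sub>a r) = \<Sum>\<^sub>i D\<^sub>i(r) [v\<^sup>a w\<^sup>b] F\<^sup>i\<close>. Since \<open>F \<equiv> v + w\<close> modulo terms of degree 2, the
  coefficient \<open>[v\<^sup>a w\<^sup>b] F\<^sup>i\<close> vanishes for \<open>|i| > |n|\<close>, and for \<open>|i| = |n|\<close> it is
  \<open>\<Prod>\<^sub>l (n\<^sub>l choose a\<^sub>l)\<close> if \<open>i = n\<close> and \<open>0\<close> otherwise. So \<open>D\<^sub>n\<close> is determined by the \<open>D\<^sub>i\<close> with
  \<open>|i| < |n|\<close> whenever some splitting \<open>n = a + b\<close> with \<open>a, b \<noteq> 0\<close> has a nonzero multinomial
  coefficient in \<open>k\<close>; such a splitting exists unless \<open>n = p\<^sup>s \<epsilon>\<^sub>l\<close>, where \<open>D\<close> and \<open>D'\<close> agree by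
  hypothesis.\<close>

subsection \<open>Multiplication of truncated power series\<close>

lemma finite_fun_le: "finite {a::'i::finite \<Rightarrow> nat. a \<le> c}"
proof -
  have "{a::'i \<Rightarrow> nat. a \<le> c} = PiE UNIV (\<lambda>i. {..c i})"
    by (auto simp: le_fun_def PiE_UNIV_domain)
  then show ?thesis by (simp add: finite_PiE)
qed

lemma idx_downward_closed: "c \<in> idx p m \<Longrightarrow> a \<le> c \<Longrightarrow> a \<in> idx p m"
  unfolding idx_def le_fun_def by (auto intro: le_less_trans)

lemma idx_diff: "c \<in> idx p m \<Longrightarrow> c - a \<in> idx p m"
  by (erule idx_downward_closed) (auto simp: le_fun_def)

lemma tmul_eq_sum: "c \<in> idx p m \<Longrightarrow> tmul p m f g c = (\<Sum>a\<in>{a. a \<le> c}. f a * g (c - a))"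
  by (simp add: tmul_def trunc_def)

lemma tmul_eq_0: "c \<notin> idx p m \<Longrightarrow> tmul p m f g c = 0"
  by (simp add: tmul_def trunc_def)

lemma fun_diff_diff_cancel: "(a::'i \<Rightarrow> nat) \<le> c \<Longrightarrow> c - (c - a) = a"
  by (auto simp: fun_eq_iff le_fun_def)

lemma tmul_commute: "tmul p m f g = tmul p m g f"
proof
  fix c
  show "tmul p m f g c = tmul p m g f c"
  proof (cases "c \<in> idx p m")
    case True
    have "(\<Sum>a\<in>{a. a \<le> c}. f a * g (c - a)) = (\<Sum>a\<in>{a. a \<le> c}. g a * f (c - a))"
      by (rule sum.reindex_bij_witness[where i="\<lambda>a. c - a" and j="\<lambda>a. c - a"])
         (auto simp: fun_diff_diff_cancel mult.commute, auto simp: le_fun_def)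
    then show ?thesis using True by (simp add: tmul_eq_sum)
  qed (simp add: tmul_eq_0)
qed

lemma tmul_assoc: "tmul p m (tmul p m f g) h = tmul p m f (tmul p m g h)"
proof
  fix c
  show "tmul p m (tmul p m f g) h c = tmul p m f (tmul p m g h) c"
  proof (cases "c \<in> idx p m")
    case True
    let ?S = "Sigma {a. a \<le> c} (\<lambda>a. {b. b \<le> a})" and ?T = "Sigma {b. b \<le> c} (\<lambda>b. {d. d \<le> c - b})"
    have "tmul p m (tmul p m f g) h c = (\<Sum>(a, b)\<in>?S. f b * g (a - b) * h (c - a))"
      using True by (auto simp: tmul_eq_sum idx_downward_closed sum.Sigma finite_fun_le
          sum_distrib_right intro!: sum.cong)
    also have "\<dots> = (\<Sum>(b, d)\<in>?T. f b * (g d * h (c - b - d)))"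
    proof (rule sum.reindex_bij_witness[where i="\<lambda>(b, d). (b + d, b)" and j="\<lambda>(a, b). (b, a - b)"])
      fix x assume "x \<in> ?S"
      then obtain a b where x: "x = (a, b)" "b \<le> a" "a \<le> c" by auto
      then have "b + (a - b) = a" "c - b - (a - b) = c - a" "a - b \<le> c - b"
        by (auto simp: le_fun_def fun_eq_iff diff_le_mono)
      with x show "(case (case x of (a, b) \<Rightarrow> (b, a - b)) of (b, d) \<Rightarrow> (b + d, b)) = x"
        and "(case x of (a, b) \<Rightarrow> (b, a - b)) \<in> ?T"
        and "(case (case x of (a, b) \<Rightarrow> (b, a - b)) of (b, d) \<Rightarrow> f b * (g d * h (c - b - d)))
          = (case x of (a, b) \<Rightarrow> f b * g (a - b) * h (c - a))"
        by (auto simp: mult.assoc intro: order_trans)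
    next
      fix y assume "y \<in> ?T"
      then obtain b d where y: "y = (b, d)" "b \<le> c" "d \<le> c - b" by auto
      then have "b + d - b = d" "b + d \<le> c" "b \<le> b + d"
        by (auto simp: le_fun_def fun_eq_iff le_diff_conv2 add.commute)
      with y show "(case (case y of (b, d) \<Rightarrow> (b + d, b)) of (a, b) \<Rightarrow> (b, a - b)) = y"
        and "(case y of (b, d) \<Rightarrow> (b + d, b)) \<in> ?S"
        by auto
    qed
    also have "\<dots> = tmul p m f (tmul p m g h) c"
      using True by (auto simp: tmul_eq_sum idx_diff sum.Sigma finite_fun_le sum_distrib_left
          intro!: sum.cong)
    finally show ?thesis .
  qed (simp add: tmul_eq_0)
qed

lemma tmul_left_commute: "tmul p m f (tmul p m g h) = tmul p m g (tmul p m f h)"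
  by (metis tmul_assoc tmul_commute)

subsection \<open>Total degree and order of vanishing\<close>

definition deg :: "('i::finite \<Rightarrow> nat) \<Rightarrow> nat" where
  "deg c = sum c UNIV"

definition vanishes_below :: "nat \<Rightarrow> (('i::finite \<Rightarrow> nat) \<Rightarrow> 'a::zero) \<Rightarrow> bool" where
  "vanishes_below d f \<longleftrightarrow> (\<forall>c. deg c < d \<longrightarrow> f c = 0)"

lemma vanishes_below_0 [simp]: "vanishes_below 0 f"
  by (simp add: vanishes_below_def)

lemma deg_diff: "a \<le> c \<Longrightarrow> deg (c - a) = deg c - deg a"
  unfolding deg_def by (subst sum_subtractf_nat[symmetric]) (auto simp: le_fun_def)

lemma deg_mono: "a \<le> c \<Longrightarrow> deg a \<le> deg c"
  unfolding deg_def by (rule sum_mono) (auto simp: le_fun_def)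

lemma deg_eq_0_iff: "deg c = 0 \<longleftrightarrow> c = (\<lambda>_. 0)"
  unfolding deg_def by (auto simp: fun_eq_iff)

lemma deg_add: "deg (a + b) = deg a + deg b"
  by (simp add: deg_def sum.distrib)

lemma deg_sum_Inl_Inr: "deg (c :: 'e::finite + 'e \<Rightarrow> nat) = (\<Sum>l\<in>UNIV. c (Inl l) + c (Inr l))"
proof -
  have "deg c = sum c (range Inl) + sum c (range Inr)"
    unfolding deg_def UNIV_sum by (rule sum.union_disjoint) auto
  then show ?thesis by (simp add: sum.reindex sum.distrib)
qed

lemma deg_case_sum: "deg (case_sum a b) = deg (a :: 'e::finite \<Rightarrow> nat) + deg (b :: 'e \<Rightarrow> nat)"
  unfolding deg_sum_Inl_Inr by (simp add: deg_def sum.distrib)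

lemma le_deg: "c x \<le> deg c"
  unfolding deg_def by (rule member_le_sum) auto

lemma finite_deg_le: "finite {i :: 'i::finite \<Rightarrow> nat. deg i \<le> d}"
proof (rule finite_subset[OF _ finite_fun_le[of "\<lambda>_. d"]])
  show "{i. deg i \<le> d} \<subseteq> {i. i \<le> (\<lambda>_. d)}"
    using le_deg order_trans by (auto simp: le_fun_def) blast
qed

lemma vanishes_below_tmul:
  fixes f g :: "('i::finite \<Rightarrow> nat) \<Rightarrow> 'a::comm_ring_1"
  assumes "vanishes_below d1 f" "vanishes_below d2 g"
  shows "vanishes_below (d1 + d2) (tmul p m f g)"
  unfolding vanishes_below_def
proof (intro allI impI)
  fix c :: "'i \<Rightarrow> nat" assume c: "deg c < d1 + d2"
  have "f a * g (c - a) = 0" if "a \<le> c" for a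
  proof (cases "deg a < d1")
    case False
    then have "deg (c - a) < d2" using c deg_diff[OF that] deg_mono[OF that] by simp
    then show ?thesis using assms(2) by (simp add: vanishes_below_def)
  qed (use assms(1) in \<open>simp add: vanishes_below_def\<close>)
  then show "tmul p m f g c = 0"
    by (cases "c \<in> idx p m") (simp_all add: tmul_eq_sum tmul_eq_0)
qed

lemma tmul_lowest_coeff:
  assumes "vanishes_below d1 f" "vanishes_below d2 g" "c \<in> idx p m" "deg c = d1 + d2"
  shows "tmul p m f g c = (\<Sum>a\<in>{a. a \<le> c \<and> deg a = d1}. f a * g (c - a))"
  unfolding tmul_eq_sum[OF assms(3)]
proof (rule sum.mono_neutral_right[OF finite_fun_le])
  show "\<forall>a\<in>{a. a \<le> c} - {a. a \<le> c \<and> deg a = d1}. f a * g (c - a) = 0"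
  proof
    fix a assume "a \<in> {a. a \<le> c} - {a. a \<le> c \<and> deg a = d1}"
    then have le: "a \<le> c" and ne: "deg a \<noteq> d1" by auto
    show "f a * g (c - a) = 0"
    proof (cases "deg a < d1")
      case False
      then have "deg (c - a) < d2" using ne assms(4) deg_diff[OF le] deg_mono[OF le] by simp
      then show ?thesis using assms(2) by (simp add: vanishes_below_def)
    qed (use assms(1) in \<open>simp add: vanishes_below_def\<close>)
  qed
qed auto

lemma tpow_Suc: "tpow p m f (Suc n) = tmul p m f (tpow p m f n)"
  by (simp add: tpow_def)

lemma vanishes_below_tpow: "vanishes_below 1 f \<Longrightarrow> vanishes_below n (tpow p m f n)"
  by (induction n) (auto simp: tpow_Suc dest: vanishes_below_tmul[where p = p and m = m])

subsection \<open>Lowest homogeneous part of the powers of \<open>F\<close>\<close>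

lemma deg_unitv [simp]: "deg (unitv x) = 1"
  by (simp add: deg_def unitv_def)

lemma zero_outside_if_deg_eq_sum: "deg a = sum a X \<Longrightarrow> x \<notin> X \<Longrightarrow> a x = 0"
proof -
  assume "deg a = sum a X" "x \<notin> X"
  moreover have "deg a = sum a X + sum a (UNIV - X)"
    unfolding deg_def by (metis finite add.commute sum.subset_diff top_greatest)
  ultimately show "a x = 0" by simp
qed

lemma pascal_if:
  "(if 1 \<le> i then if i - 1 + j = n then of_nat (n choose (i - 1)) else 0 else 0)
   + (if 1 \<le> j then if i + (j - 1) = n then of_nat (n choose i) else 0 else 0)
   = (if i + j = Suc n then of_nat (Suc n choose i) else (0::'a::comm_ring_1))"
  by (cases i; cases j) (auto simp: binomial_Suc_Suc)

lemma tpow_lowest_coeff: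
  fixes f :: "('e::finite + 'e \<Rightarrow> nat) \<Rightarrow> 'a::comm_ring_1"
  assumes f_low: "vanishes_below 1 f"
    and f_lin: "\<And>a. deg a = 1 \<Longrightarrow> f a = (if a = unitv (Inl l) \<or> a = unitv (Inr l) then 1 else 0)"
  shows "c \<in> idx p m \<Longrightarrow> deg c = n \<Longrightarrow>
    tpow p m f n c = (if c (Inl l) + c (Inr l) = n then of_nat (n choose c (Inl l)) else 0)"
proof (induction n arbitrary: c)
  case 0
  then show ?case by (simp add: deg_eq_0_iff tpow_def tone_def)
next
  case (Suc n)
  define T where "T c = (if c (Inl l) + c (Inr l) = n then of_nat (n choose c (Inl l)) else (0::'a))" for c
  let ?u = "unitv (Inl l) :: 'e + 'e \<Rightarrow> nat" and ?w = "unitv (Inr l) :: 'e + 'e \<Rightarrow> nat"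
  let ?A = "{a. a \<le> c \<and> deg a = 1}"
  have "tpow p m f (Suc n) c = (\<Sum>a\<in>?A. f a * tpow p m f n (c - a))"
    unfolding tpow_Suc
    by (rule tmul_lowest_coeff[OF f_low vanishes_below_tpow[OF f_low]]) (use Suc.prems in auto)
  also have "\<dots> = (\<Sum>a\<in>?A. (if a = ?u then T (c - a) else 0) + (if a = ?w then T (c - a) else 0))"
  proof (rule sum.cong)
    fix a assume "a \<in> ?A"
    then have "a \<le> c" "deg a = 1" by auto
    then have "deg (c - a) = n" using Suc.prems(2) by (simp add: deg_diff)
    then have "tpow p m f n (c - a) = T (c - a)"
      unfolding T_def by (rule Suc.IH[OF idx_diff[OF Suc.prems(1)]])
    moreover have "?u \<noteq> ?w" by (auto simp: unitv_def fun_eq_iff)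
    ultimately show "f a * tpow p m f n (c - a) = (if a = ?u then T (c - a) else 0) + (if a = ?w then T (c - a) else 0)"
      using f_lin[OF \<open>deg a = 1\<close>] by auto
  qed simp
  also have "\<dots> = (if ?u \<in> ?A then T (c - ?u) else 0) + (if ?w \<in> ?A then T (c - ?w) else 0)"
    by (simp add: sum.distrib finite_fun_le)
  also have "\<dots> = (if c (Inl l) + c (Inr l) = Suc n then of_nat (Suc n choose c (Inl l)) else 0)"
  proof -
    have "?u \<in> ?A \<longleftrightarrow> 1 \<le> c (Inl l)" "?w \<in> ?A \<longleftrightarrow> 1 \<le> c (Inr l)"
      using deg_unitv by (auto simp: le_fun_def unitv_def)
    moreover have "T (c - ?u) = (if c (Inl l) - 1 + c (Inr l) = n then of_nat (n choose (c (Inl l) - 1)) else 0)"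
      "T (c - ?w) = (if c (Inl l) + (c (Inr l) - 1) = n then of_nat (n choose c (Inl l)) else 0)"
      by (simp_all add: T_def unitv_def)
    ultimately show ?thesis
      by (simp only: pascal_if)
  qed
  finally show ?case .
qed

definition zero_outside :: "'i set \<Rightarrow> ('i \<Rightarrow> nat) \<Rightarrow> 'i \<Rightarrow> nat" where
  "zero_outside X c x = (if x \<in> X then c x else 0)"

lemma tmul_lowest_coeff_separated:
  fixes f g :: "('i::finite \<Rightarrow> nat) \<Rightarrow> 'a::comm_ring_1"
  assumes f_low: "vanishes_below d1 f" and g_low: "vanishes_below d2 g"
    and c: "c \<in> idx p m" "deg c = d1 + d2"
    and f_on: "\<And>a x. a \<in> idx p m \<Longrightarrow> deg a = d1 \<Longrightarrow> f a \<noteq> 0 \<Longrightarrow> x \<notin> X \<Longrightarrow> a x = 0"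
    and g_off: "\<And>b x. b \<in> idx p m \<Longrightarrow> deg b = d2 \<Longrightarrow> g b \<noteq> 0 \<Longrightarrow> x \<in> X \<Longrightarrow> b x = 0"
  shows "tmul p m f g c =
    (if deg (zero_outside X c) = d1 then f (zero_outside X c) * g (c - zero_outside X c) else 0)"
proof -
  let ?a0 = "zero_outside X c" and ?A = "{a. a \<le> c \<and> deg a = d1}"
  have "f a * g (c - a) = 0" if "a \<in> ?A" "a \<noteq> ?a0" for a
  proof (rule ccontr)
    assume nz: "f a * g (c - a) \<noteq> 0"
    from that have "a \<le> c" "deg a = d1" by auto
    then have "a \<in> idx p m" "c - a \<in> idx p m" "deg (c - a) = d2"
      using c by (auto simp: idx_downward_closed idx_diff deg_diff)
    then have "a x = 0" if "x \<notin> X" for x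
      using f_on nz \<open>deg a = d1\<close> that by fastforce
    moreover have "c x - a x = 0" if "x \<in> X" for x
      using g_off[OF \<open>c - a \<in> idx p m\<close> \<open>deg (c - a) = d2\<close>] nz that by fastforce
    ultimately have "a = ?a0"
      using \<open>a \<le> c\<close> by (auto simp: zero_outside_def le_fun_def fun_eq_iff intro: antisym)
    with that show False by simp
  qed
  then have "tmul p m f g c = (\<Sum>a\<in>?A. if a = ?a0 then f a * g (c - a) else 0)"
    using tmul_lowest_coeff[OF f_low g_low c] by (auto intro: sum.cong)
  also have "\<dots> = (if ?a0 \<in> ?A then f ?a0 * g (c - ?a0) else 0)"
    by (rule sum.delta) (rule finite_subset[OF _ finite_fun_le[of c]], auto)
  also have "\<dots> = (if deg ?a0 = d1 then f ?a0 * g (c - ?a0) else 0)"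
    by (simp add: zero_outside_def le_fun_def)
  finally show ?thesis .
qed

lemma deg_zero_outside: "deg (zero_outside X c) = sum c X"
  by (simp add: deg_def zero_outside_def sum.If_cases)

lemma tmul_tpow_lowest_coeff:
  fixes f V :: "('e::finite + 'e \<Rightarrow> nat) \<Rightarrow> 'a::comm_ring_1"
  assumes f_low: "vanishes_below 1 f"
    and f_lin: "\<And>a. deg a = 1 \<Longrightarrow> f a = (if a = unitv (Inl l) \<or> a = unitv (Inr l) then 1 else 0)"
    and V_low: "vanishes_below d V"
    and V_off: "\<And>b. b \<in> idx p m \<Longrightarrow> deg b = d \<Longrightarrow> V b \<noteq> 0 \<Longrightarrow> b (Inl l) = 0 \<and> b (Inr l) = 0"
    and c: "c \<in> idx p m" "deg c = n + d"
  shows "tmul p m (tpow p m f n) V c = (if c (Inl l) + c (Inr l) = n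
    then of_nat (n choose c (Inl l)) * V (c - zero_outside {Inl l, Inr l} c) else 0)"
proof -
  let ?X = "{Inl l, Inr l}"
  let ?a0 = "zero_outside ?X c"
  have P_lowest: "tpow p m f n a = (if a (Inl l) + a (Inr l) = n then of_nat (n choose a (Inl l)) else 0)"
    if "a \<in> idx p m" "deg a = n" for a
    by (rule tpow_lowest_coeff[OF f_low]) (use f_lin that in auto)
  have "tmul p m (tpow p m f n) V c = (if deg ?a0 = n then tpow p m f n ?a0 * V (c - ?a0) else 0)"
  proof (rule tmul_lowest_coeff_separated[OF vanishes_below_tpow[OF f_low] V_low c])
    show "a x = 0" if "a \<in> idx p m" "deg a = n" "tpow p m f n a \<noteq> 0" "x \<notin> ?X" for a x
      using that P_lowest[of a] by (intro zero_outside_if_deg_eq_sum[of a ?X]) (auto split: if_splits)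
    show "b x = 0" if "b \<in> idx p m" "deg b = d" "V b \<noteq> 0" "x \<in> ?X" for b x
      using that V_off[of b] by auto
  qed
  also have "\<dots> = (if c (Inl l) + c (Inr l) = n
      then of_nat (n choose c (Inl l)) * V (c - ?a0) else 0)"
    using P_lowest[OF idx_downward_closed[OF c(1)], of ?a0]
    by (simp add: deg_zero_outside zero_outside_def le_fun_def)
  finally show ?thesis .
qed

lemma fold_tpow_lowest_coeff:
  fixes p :: nat and m :: enat and F :: "'e::finite \<Rightarrow> ('e + 'e \<Rightarrow> nat) \<Rightarrow> 'a::comm_ring_1" and k :: "'e \<Rightarrow> nat"
  assumes F_low: "\<And>l. vanishes_below 1 (F l)"
    and F_lin: "\<And>l a. deg a = 1 \<Longrightarrow> F l a = (if a = unitv (Inl l) \<or> a = unitv (Inr l) then 1 else 0)"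
    and "finite S"
  defines "G \<equiv> \<lambda>l acc. tmul p m (tpow p m (F l) (k l)) acc"
  shows "vanishes_below (sum k S) (Finite_Set.fold G tone S) \<and>
    (\<forall>c \<in> idx p m. deg c = sum k S \<longrightarrow> Finite_Set.fold G tone S c =
       (if \<forall>l. c (Inl l) + c (Inr l) = (if l \<in> S then k l else 0)
        then of_nat (\<Prod>l\<in>S. k l choose c (Inl l)) else 0))"
  using \<open>finite S\<close>
proof (induction S rule: finite_induct)
  case empty
  show ?case by (auto simp: deg_eq_0_iff tone_def)
next
  case (insert l S)
  interpret G: comp_fun_commute G
    by unfold_locales (auto simp: G_def fun_eq_iff tmul_left_commute)
  define P where "P = tpow p m (F l) (k l)"
  define V where "V = Finite_Set.fold G tone S"
  have V_low: "vanishes_below (sum k S) V"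
    and V_lowest: "\<And>b. b \<in> idx p m \<Longrightarrow> deg b = sum k S \<Longrightarrow> V b =
       (if \<forall>l. b (Inl l) + b (Inr l) = (if l \<in> S then k l else 0)
        then of_nat (\<Prod>l\<in>S. k l choose b (Inl l)) else 0)"
    using insert.IH by (auto simp: V_def)
  have "Finite_Set.fold G tone (insert l S) = tmul p m P V"
    using G.fold_insert[OF insert.hyps] by (simp add: G_def P_def V_def)
  moreover have "vanishes_below (k l + sum k S) (tmul p m P V)"
    unfolding P_def by (rule vanishes_below_tmul[OF vanishes_below_tpow[OF F_low] V_low])
  moreover have "tmul p m P V c =
       (if \<forall>l'. c (Inl l') + c (Inr l') = (if l' \<in> insert l S then k l' else 0)
        then of_nat (\<Prod>l'\<in>insert l S. k l' choose c (Inl l')) else 0)"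
    if c: "c \<in> idx p m" "deg c = k l + sum k S" for c
  proof -
    let ?a0 = "zero_outside {Inl l, Inr l} c"
    have "tmul p m P V c = (if c (Inl l) + c (Inr l) = k l
        then of_nat (k l choose c (Inl l)) * V (c - ?a0) else 0)"
      unfolding P_def using V_lowest insert.hyps(2)
      by (intro tmul_tpow_lowest_coeff[OF F_low F_lin V_low _ c])
        (auto split: if_splits dest!: spec[of _ l])
    also have "\<dots> = (if \<forall>l'. c (Inl l') + c (Inr l') = (if l' \<in> insert l S then k l' else 0)
        then of_nat (\<Prod>l'\<in>insert l S. k l' choose c (Inl l')) else 0)"
    proof (cases "c (Inl l) + c (Inr l) = k l")
      case True
      have "(c - ?a0) (Inl l') = (if l' = l then 0 else c (Inl l'))"
        "(c - ?a0) (Inr l') = (if l' = l then 0 else c (Inr l'))" for l'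
        by (auto simp: zero_outside_def)
      moreover have "(\<Prod>l'\<in>S. k l' choose (c - ?a0) (Inl l')) = (\<Prod>l'\<in>S. k l' choose c (Inl l'))"
        using insert.hyps(2) by (intro prod.cong) (auto simp: zero_outside_def)
      moreover have "deg (c - ?a0) = sum k S"
        using c True by (simp add: deg_diff zero_outside_def le_fun_def deg_zero_outside)
      ultimately show ?thesis
        using True V_lowest[OF idx_diff[OF c(1)]] insert.hyps by auto
    next
      case False
      then show ?thesis by (auto dest!: spec[of _ l])
    qed
    finally show ?thesis .
  qed
  ultimately show ?case using insert.hyps by simp
qed

lemma vanishes_below_Fpow:
  assumes "\<And>l. vanishes_below 1 (F l)"
    and "\<And>l a. deg a = 1 \<Longrightarrow> F l a = (if a = unitv (Inl l) \<or> a = unitv (Inr l) then 1 else 0)"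
  shows "vanishes_below (deg i) (Fpow p m F i)"
  using fold_tpow_lowest_coeff[OF assms finite_UNIV, where p = p and m = m and k = i] by (simp add: Fpow_def deg_def)

lemma Fpow_lowest_coeff:
  assumes "\<And>l. vanishes_below 1 (F l)"
    and "\<And>l a. deg a = 1 \<Longrightarrow> F l a = (if a = unitv (Inl l) \<or> a = unitv (Inr l) then 1 else 0)"
    and "c \<in> idx p m" "deg c = deg i"
  shows "Fpow p m F i c =
    (if \<forall>l. c (Inl l) + c (Inr l) = i l then of_nat (\<Prod>l\<in>UNIV. i l choose c (Inl l)) else 0)"
  using fold_tpow_lowest_coeff[OF assms(1,2) finite_UNIV, where p = p and m = m and k = i] assms(3,4)
  by (simp add: Fpow_def deg_def)

lemma Fpow_coeff_case_sum:
  assumes "\<And>l. vanishes_below 1 (F l)"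
    and "\<And>l a. deg a = 1 \<Longrightarrow> F l a = (if a = unitv (Inl l) \<or> a = unitv (Inr l) then 1 else 0)"
    and "case_sum a b \<in> idx p m" "deg a + deg b \<le> deg i"
  shows "Fpow p m F i (case_sum a b) =
    (if i = a + b then of_nat (\<Prod>l\<in>UNIV. i l choose a l) else 0)"
proof (cases "deg i = deg a + deg b")
  case True
  have "(\<forall>l. a l + b l = i l) \<longleftrightarrow> i = a + b" by (auto simp: fun_eq_iff)
  with True show ?thesis
    using Fpow_lowest_coeff[OF assms(1-3), of i] by (simp add: deg_case_sum)
next
  case False
  then have "deg (case_sum a b) < deg i" "i \<noteq> a + b"
    using assms(4) by (auto simp: deg_case_sum deg_add)
  then show ?thesis
    using vanishes_below_Fpow[OF assms(1,2)] by (simp add: vanishes_below_def)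
qed

lemma case_sum_Inl_Inr: "case_sum (c \<circ> Inl) (c \<circ> Inr) = c"
  by (auto simp: fun_eq_iff split: sum.split)

lemma linear_part_eq_v_plus_w:
  fixes f :: "('e::finite + 'e \<Rightarrow> nat) \<Rightarrow> 'a::comm_ring_1"
  assumes v0: "\<And>a. f (case_sum a (\<lambda>_. 0)) = (if a = unitv l then 1 else 0)"
    and w0: "\<And>b. f (case_sum (\<lambda>_. 0) b) = (if b = unitv l then 1 else 0)"
  shows "vanishes_below 1 f"
    and "deg c = 1 \<Longrightarrow> f c = (if c = unitv (Inl l) \<or> c = unitv (Inr l) then 1 else 0)"
proof -
  have unitv_Inl: "unitv (Inl l) = case_sum (unitv l) (\<lambda>_. 0)"
    and unitv_Inr: "unitv (Inr l) = case_sum (\<lambda>_. 0) (unitv l)"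
    by (auto simp: unitv_def fun_eq_iff split: sum.split)
  have case_sum_eq_iff: "case_sum a b = case_sum a' b' \<longleftrightarrow> a = a' \<and> b = b'"
    for a b a' b' :: "'e \<Rightarrow> nat"
    by (auto simp: fun_eq_iff split: sum.split)
  have unitv_ne_0: "unitv l \<noteq> (\<lambda>_. 0)"
    by (auto simp: unitv_def fun_eq_iff)
  show "vanishes_below 1 f"
    unfolding vanishes_below_def
    using v0[of "\<lambda>_. 0"] unitv_ne_0 case_sum_Inl_Inr
    by (auto simp: deg_eq_0_iff)
  assume "deg c = 1"
  then have "deg (c \<circ> Inl) + deg (c \<circ> Inr) = 1"
    using deg_case_sum[of "c \<circ> Inl" "c \<circ> Inr"] by (simp add: case_sum_Inl_Inr)
  then consider "c \<circ> Inr = (\<lambda>_. 0)" | "c \<circ> Inl = (\<lambda>_. 0)"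
    using deg_eq_0_iff[of "c \<circ> Inl"] deg_eq_0_iff[of "c \<circ> Inr"] by linarith
  then show "f c = (if c = unitv (Inl l) \<or> c = unitv (Inr l) then 1 else 0)"
    using v0[of "c \<circ> Inl"] w0[of "c \<circ> Inr"] case_sum_Inl_Inr[of c] unitv_ne_0
    by cases (auto simp: unitv_Inl unitv_Inr case_sum_eq_iff)
qed

subsection \<open>Binomial coefficients in characteristic \<open>p\<close>\<close>

text \<open>Write \<open>t = q w\<close> with \<open>q\<close> a power of \<open>p\<close> and \<open>p \<nmid> w\<close>; then \<open>(1 + X)\<^sup>t = (1 + X\<^sup>q)\<^sup>w\<close>
  by the Frobenius, so \<open>t choose q = w \<noteq> 0\<close> in characteristic \<open>p\<close>.\<close>

lemma binomial_nonzero_if_not_prime_power: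
  assumes "CHAR('k::field) = p" "prime p" "t > 0" "\<nexists>s. t = p ^ s"
  shows "\<exists>u. 0 < u \<and> u < t \<and> (of_nat (t choose u) :: 'k) \<noteq> 0"
proof -
  obtain w where tw: "t = p ^ multiplicity p t * w" and "\<not> p dvd w"
  proof (rule multiplicity_decompose'[of t p])
    show "t \<noteq> 0" using assms(3) by simp
    show "\<not> is_unit p" using prime_gt_1_nat[OF assms(2)] by simp
  qed
  define q where "q = p ^ multiplicity p t"
  have t_eq: "t = q * w" unfolding q_def by (rule tw)
  have "q > 0" using assms(2) by (simp add: q_def prime_gt_0_nat)
  have "w \<noteq> 0" using t_eq assms(3) by auto
  have "w \<noteq> 1" using t_eq assms(4) unfolding q_def by (metis mult.right_neutral)
  have "q < t" using \<open>q > 0\<close> \<open>w \<noteq> 0\<close> \<open>w \<noteq> 1\<close> by (simp add: t_eq)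
  have frobenius: "([:1, 1:] :: 'k poly) ^ q = 1 + monom 1 q"
  proof -
    have "prime CHAR('k poly)" "q = CHAR('k poly) ^ multiplicity p t"
      using assms(1,2) by (simp_all add: q_def)
    moreover have "([:1, 1:] :: 'k poly) = 1 + monom 1 1"
      by (simp add: poly_eq_iff coeff_monom coeff_pCons split: nat.split)
    ultimately show ?thesis
      by (simp add: freshmans_dream' monom_power)
  qed
  have "([:1, 1:] :: 'k poly) ^ t = (monom 1 q + 1) ^ w"
    by (simp add: t_eq power_mult frobenius add.commute)
  then have "coeff (([:1, 1:] :: 'k poly) ^ t) q = (\<Sum>i\<le>w. coeff (of_nat (w choose i) * monom 1 (q * i)) q)"
    by (simp add: binomial_ring coeff_sum monom_power)
  also have "\<dots> = (\<Sum>i\<le>w. if i = 1 then of_nat w else 0)"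
    using \<open>q > 0\<close> by (intro sum.cong) (auto simp: of_nat_poly coeff_monom)
  finally have "(of_nat (t choose q) :: 'k) = of_nat w"
    using coeff_linear_poly_power[of q t "1::'k" 1] \<open>q < t\<close> \<open>w \<noteq> 0\<close> by simp
  moreover have "(of_nat w :: 'k) \<noteq> 0"
    using \<open>\<not> p dvd w\<close> by (simp add: of_nat_eq_0_iff_char_dvd assms(1))
  ultimately show ?thesis using \<open>q > 0\<close> \<open>q < t\<close> by auto
qed

lemma exists_split_with_nonzero_multinomial:
  fixes n :: "'e::finite \<Rightarrow> nat"
  assumes "CHAR('k::field) = p" "prime p" "n \<noteq> (\<lambda>_. 0)"
    and not_unit_power: "\<nexists>l s. n = (\<lambda>j. p ^ s * unitv l j)"
  obtains a b where "a + b = n" "a \<noteq> (\<lambda>_. 0)" "b \<noteq> (\<lambda>_. 0)"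
    "(of_nat (\<Prod>l\<in>UNIV. n l choose a l) :: 'k) \<noteq> 0"
proof -
  obtain l where "n l > 0" using assms(3) by (auto simp: fun_eq_iff)
  show ?thesis
  proof (cases "\<exists>l'. l' \<noteq> l \<and> n l' > 0")
    case True
    then obtain l' where "l' \<noteq> l" "n l' > 0" by blast
    define a where "a = (\<lambda>j. if j = l then n l else 0)"
    have "(\<Prod>l\<in>UNIV. n l choose a l) = 1" by (rule prod.neutral) (auto simp: a_def)
    moreover have "a + (n - a) = n" by (auto simp: a_def fun_eq_iff)
    moreover have "a \<noteq> (\<lambda>_. 0)" using \<open>n l > 0\<close> by (auto simp: a_def fun_eq_iff)
    moreover have "n - a \<noteq> (\<lambda>_. 0)"
      using \<open>l' \<noteq> l\<close> \<open>n l' > 0\<close> by (auto simp: a_def fun_eq_iff intro!: exI[of _ l'])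
    ultimately show ?thesis by (intro that[of a "n - a"]) simp_all
  next
    case False
    then have n_eq: "n = (\<lambda>j. n l * unitv l j)" by (auto simp: fun_eq_iff unitv_def)
    then have "\<nexists>s. n l = p ^ s" using not_unit_power by metis
    then obtain u where u: "0 < u" "u < n l" "(of_nat (n l choose u) :: 'k) \<noteq> 0"
      using binomial_nonzero_if_not_prime_power[OF assms(1,2) \<open>n l > 0\<close>] by blast
    define a where "a = (\<lambda>j. if j = l then u else 0)"
    have "(\<Prod>j\<in>UNIV. n j choose a j) = (\<Prod>j\<in>UNIV. if j = l then n l choose u else 1)"
      using False by (intro prod.cong) (auto simp: a_def)
    moreover have "a + (n - a) = n" using u by (auto simp: a_def fun_eq_iff)
    moreover have "a \<noteq> (\<lambda>_. 0)" using u by (auto simp: a_def fun_eq_iff)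
    moreover have "n - a \<noteq> (\<lambda>_. 0)" using u by (auto simp: a_def fun_eq_iff intro!: exI[of _ l])
    ultimately show ?thesis using u by (intro that[of a "n - a"]) simp_all
  qed
qed

lemma unit_power_in_idx_iff:
  assumes "p > 1"
  shows "(\<lambda>j. p ^ s * unitv l j) \<in> idx p m \<longleftrightarrow> enat s < m"
  using assms by (cases m) (auto simp: idx_def unitv_def)

subsection \<open>Uniqueness of \<open>F\<close>-derivations\<close>

lemma Sum_any_eq_imp_eq_at:
  fixes f g :: "'a \<Rightarrow> 'b::ab_group_add"
  assumes "finite {i. f i \<noteq> 0}" "finite {i. g i \<noteq> 0}"
    and "\<And>i. i \<noteq> n \<Longrightarrow> f i = g i" and "Sum_any f = Sum_any g"
  shows "f n = g n"
proof -
  let ?K = "insert n ({i. f i \<noteq> 0} \<union> {i. g i \<noteq> 0})"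
  have "finite ?K" using assms(1,2) by simp
  have "Sum_any h = h n + sum h (?K - {n})" if "{i. h i \<noteq> 0} \<subseteq> ?K" for h :: "'a \<Rightarrow> 'b"
  proof -
    have "Sum_any h = sum h ?K" by (rule Sum_any.expand_superset[OF \<open>finite ?K\<close> that])
    also have "\<dots> = h n + sum h (?K - {n})" by (rule sum.remove[OF \<open>finite ?K\<close>]) simp
    finally show ?thesis .
  qed
  then have "Sum_any f = f n + sum f (?K - {n})" "Sum_any g = g n + sum g (?K - {n})"
    by blast+
  moreover have "sum f (?K - {n}) = sum g (?K - {n})"
    using assms(3) by (intro sum.cong) auto
  ultimately show ?thesis using assms(4) by simp
qed

lemma F_deriv_coeff_case_sum:
  assumes "F_deriv p m phi F D" "case_sum a b \<in> idx p m"
  shows "D b (D a r) =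
    Sum_any (\<lambda>i. if i \<in> idx p m then D i r * phi (Fpow p m F i (case_sum a b)) else 0)"
proof -
  have "D (case_sum a b \<circ> Inr) (D (case_sum a b \<circ> Inl) r) =
      Sum_any (\<lambda>i. if i \<in> idx p m then D i r * phi (Fpow p m F i (case_sum a b)) else 0)"
    using assms unfolding F_deriv_def by blast
  moreover have "case_sum a b \<circ> Inl = a" "case_sum a b \<circ> Inr = b" by auto
  ultimately show ?thesis by simp
qed

lemma cancel_hom_image:
  fixes phi :: "'k::field \<Rightarrow> 'r::comm_ring_1"
  assumes "\<And>x y. phi (x * y) = phi x * phi y" "phi 1 = 1"
    and "x \<noteq> 0" "u * phi x = v * phi x"
  shows "u = v"
proof -
  have inv: "phi x * phi (inverse x) = 1" using assms(1)[of x "inverse x"] assms(2,3) by simp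
  have "u = u * (phi x * phi (inverse x))" using inv by simp
  also have "\<dots> = v * (phi x * phi (inverse x))" using assms(4) by (simp flip: mult.assoc)
  also have "\<dots> = v" using inv by simp
  finally show ?thesis .
qed

lemma F_derivs_eq_if_eq_below:
  fixes phi :: "'k::field \<Rightarrow> 'r::comm_ring_1" and F :: "'e::finite \<Rightarrow> ('e + 'e \<Rightarrow> nat) \<Rightarrow> 'k"
  assumes phi_hom: "\<And>x y. phi (x + y) = phi x + phi y"
      "\<And>x y. phi (x * y) = phi x * phi y" "phi 1 = 1"
    and F_low: "\<And>l. vanishes_below 1 (F l)"
    and F_lin: "\<And>l a. deg a = 1 \<Longrightarrow> F l a = (if a = unitv (Inl l) \<or> a = unitv (Inr l) then 1 else 0)"
    and D: "F_deriv p m phi F D" and D': "F_deriv p m phi F D'"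
    and n: "n \<in> idx p m" and split: "a + b = n" "a \<noteq> (\<lambda>_. 0)" "b \<noteq> (\<lambda>_. 0)"
    and coeff: "(of_nat (\<Prod>l\<in>UNIV. n l choose a l) :: 'k) \<noteq> 0"
    and below: "\<And>i. i \<in> idx p m \<Longrightarrow> deg i < deg n \<Longrightarrow> D i = D' i"
  shows "D n = D' n"
proof
  fix r
  let ?c = "case_sum a b"
  have "a \<le> n" "b \<le> n" using split(1) by (auto simp: le_fun_def)
  then have ab: "a \<in> idx p m" "b \<in> idx p m" using n by (auto intro: idx_downward_closed)
  have deg_n: "deg n = deg a + deg b" using split(1) deg_add by metis
  then have "deg a < deg n" "deg b < deg n"
    using split(2,3) deg_eq_0_iff[of a] deg_eq_0_iff[of b] by auto
  have c: "?c \<in> idx p m" using ab by (auto simp: idx_def split: sum.split)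
  define \<beta> :: 'k where "\<beta> = of_nat (\<Prod>l\<in>UNIV. n l choose a l)"
  define g where "g E i = (if i \<in> idx p m then E i r * phi (Fpow p m F i ?c) else 0)"
    for E :: "('e \<Rightarrow> nat) \<Rightarrow> 'r \<Rightarrow> 'r" and i
  have Fpow_c: "Fpow p m F i ?c = (if i = n then \<beta> else 0)" if "deg n \<le> deg i" for i
    using Fpow_coeff_case_sum[OF F_low F_lin c, of i] that split(1) deg_n by (simp add: \<beta>_def)
  have phi_0: "phi 0 = 0" using phi_hom(1)[of 0 0] by simp
  have g_eq: "g D i = g D' i" if "i \<noteq> n" for i
    using below[of i] Fpow_c[of i] that phi_0 by (cases "deg i < deg n") (auto simp: g_def)
  have g_finite: "finite {i. g E i \<noteq> 0}" for E
  proof (rule finite_subset[OF _ finite_deg_le[of "deg n"]])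
    have "g E i = 0" if "deg n < deg i" for i
      using Fpow_c[of i] that phi_0 by (auto simp: g_def)
    then show "{i. g E i \<noteq> 0} \<subseteq> {i. deg i \<le> deg n}"
      by (metis (mono_tags) mem_Collect_eq not_le subsetI)
  qed
  have "Sum_any (g D) = D b (D a r)" "Sum_any (g D') = D' b (D' a r)"
    unfolding g_def by (simp_all only: F_deriv_coeff_case_sum[OF D c] F_deriv_coeff_case_sum[OF D' c])
  moreover have "D a = D' a" "D b = D' b"
    using below ab \<open>deg a < deg n\<close> \<open>deg b < deg n\<close> by simp_all
  ultimately have Sum_any_eq: "Sum_any (g D) = Sum_any (g D')" by simp
  have "g D n = g D' n"
    by (rule Sum_any_eq_imp_eq_at[of "g D" "g D'" n, OF g_finite g_finite _ Sum_any_eq]) (rule g_eq)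
  then have "D n r * phi \<beta> = D' n r * phi \<beta>"
    using n Fpow_c[of n] by (simp add: g_def)
  with coeff show "D n r = D' n r"
    unfolding \<beta>_def by (rule cancel_hom_image[OF phi_hom(2,3)])
qed

theorem fact2p14:
  fixes p :: nat and m :: enat
    and phi :: "'k::field \<Rightarrow> 'r::comm_ring_1"
    and F :: "'e::finite \<Rightarrow> (('e + 'e) \<Rightarrow> nat) \<Rightarrow> 'k"
    and D D' :: "('e \<Rightarrow> nat) \<Rightarrow> 'r \<Rightarrow> 'r"
  assumes char: "CHAR('k) = p" and ppos: "p > 0"
    and mpos: "m > 0"
    and phi_hom: "\<And>x y. phi (x + y) = phi x + phi y"
      "\<And>x y. phi (x * y) = phi x * phi y" "phi 1 = 1"
    and F_in: "\<And>l. in_trunc p m (F l)"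
    and F_v0: "\<And>l a. F l (case_sum a (\<lambda>_. 0)) = (if a = unitv l then 1 else 0)"
    and F_0w: "\<And>l b. F l (case_sum (\<lambda>_. 0) b) = (if b = unitv l then 1 else 0)"
    and DF: "F_deriv p m phi F D"
    and D'F: "F_deriv p m phi F D'"
    and agree: "\<And>l (i::nat). enat i < m \<Longrightarrow> D (\<lambda>j. p ^ i * unitv l j) = D' (\<lambda>j. p ^ i * unitv l j)"
  shows "\<forall>i \<in> idx p m. D i = D' i"
proof
  have "prime p" using char ppos prime_CHAR_semidom by blast
  note F_linear = linear_part_eq_v_plus_w[OF F_v0 F_0w]
  fix n :: "'e \<Rightarrow> nat" assume "n \<in> idx p m"
  then show "D n = D' n"
  proof (induction "deg n" arbitrary: n rule: less_induct)
    case less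
    consider "n = (\<lambda>_. 0)" | l s where "n = (\<lambda>j. p ^ s * unitv l j)"
      | "n \<noteq> (\<lambda>_. 0)" "\<nexists>l s. n = (\<lambda>j. p ^ s * unitv l j)"
      by metis
    then show ?case
    proof cases
      case 1
      then show ?thesis using DF D'F by (simp add: F_deriv_def HS_deriv_def)
    next
      case 2
      with less.prems have "(\<lambda>j. p ^ s * unitv l j) \<in> idx p m" by simp
      then have "enat s < m"
        by (rule unit_power_in_idx_iff[OF prime_gt_1_nat[OF \<open>prime p\<close>], THEN iffD1])
      then show ?thesis unfolding 2 by (rule agree)
    next
      case 3
      obtain a b where split: "a + b = n" "a \<noteq> (\<lambda>_. 0)" "b \<noteq> (\<lambda>_. 0)"
        "(of_nat (\<Prod>l\<in>UNIV. n l choose a l) :: 'k) \<noteq> 0"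
        by (rule exists_split_with_nonzero_multinomial[OF char \<open>prime p\<close> 3])
      show ?thesis
        using F_derivs_eq_if_eq_below[OF phi_hom F_linear DF D'F less.prems split] less.hyps
        by blast
    qed
  qed
qed

end
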